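(* Let $\lambda_1\neq\lambda_2$ be real numbers, $n_1,n_2$ positive integers, $n=n_1+n_2$, and let $\mathcal{F}$ and $\mathcal{D}$ be finite sets of real numbers with $\{\lambda_1,\lambda_2\}\cap\mathcal{F}=\emptyset$. Then there exists $A\in\mathcal{S}(K_n)$ with spectrum $\{\lambda_1^{(n_1)},\lambda_2^{(n_2)}\}$ such that for every vertex $v$ of $K_n$ the matrix $A(v)$ has no eigenvalue in $\mathcal{F}$, and no diagonal entry of $A$ lies in $\mathcal{D}$.
   Context: $\mathcal{S}(K_n)$ is the set of $n\times n$ real symmetric matrices all of whose off-diagonal entries are nonzero. $A(v)$ denotes the submatrix of $A$ obtained by deleting row and column $v$. $\lambda^{(k)}$ denotes $k$ copies of $\lambda$. *)

theory Defs
  imports "Jordan_Normal_Form.Char_Poly" "Jordan_Normal_Form.Determinant"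
begin

definition S_K :: "nat \<Rightarrow> real mat set" where
  "S_K n = {A. A \<in> carrier_mat n n \<and> A\<^sup>T = A \<and>
              (\<forall>i<n. \<forall>j<n. i \<noteq> j \<longrightarrow> A $$ (i, j) \<noteq> 0)}"

definition del_vertex :: "real mat \<Rightarrow> nat \<Rightarrow> real mat" where
  "del_vertex A v = mat_delete A v v"

(* spectrum (as a multiset, via the characteristic polynomial) is
   {l1^(n1), l2^(n2)} *)
definition has_spectrum2 :: "real mat \<Rightarrow> real \<Rightarrow> nat \<Rightarrow> real \<Rightarrow> nat \<Rightarrow> bool" where
  "has_spectrum2 A l1 n1 l2 n2 \<longleftrightarrow>
     char_poly A = [:-l1, 1:] ^ n1 * [:-l2, 1:] ^ n2"

end

theory Submission
  imports Defs
begin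

(* Take A = (l1 I + (b/n1) J, g J; g J, l2 I - (b/n2) J), J all-ones, with
   n1 n2 g^2 = b (l2 - l1 - b) > 0, so that no off-diagonal entry vanishes.
   For an eigenvector, either both block sums vanish and the eigenvalue is l1 or l2,
   or the block sums solve the 2x2 quotient system, whose eigenvalues are again l1 and l2;
   the trace then forces the multiplicities n1 and n2. Deleting a vertex yields a matrix of
   the same shape, whose only possible eigenvalue besides l1, l2 is l2 - b/n1 resp.
   l1 + b/n2, and the diagonal entries are l1 + b/n1 and l2 - b/n2. Since b ranges over an
   interval, it can avoid the finitely many values putting one of these into F resp. D. *)

lemma sum_lessThan_add_split:
  fixes m1 m2 :: nat
  shows "(\<Sum>j<m1 + m2. f j) = (\<Sum>j<m1. f j) + (\<Sum>j\<in>{m1..<m1 + m2}. f j)"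
  using sum.atLeastLessThan_concat[of 0 m1 "m1 + m2" f] by (simp add: atLeast0LessThan)

lemma cramer_2x2_singular:
  fixes x y u w s t :: "'a::field"
  assumes "x * s + u * t = 0" and "w * s + y * t = 0" and "s \<noteq> 0 \<or> t \<noteq> 0"
  shows "x * y = u * w"
proof -
  have "(x * y - u * w) * s = y * (x * s + u * t) - u * (w * s + y * t)"
    and "(x * y - u * w) * t = x * (w * s + y * t) - w * (x * s + u * t)"
    by (simp_all add: algebra_simps)
  with assms show ?thesis by auto
qed

definition mat_trace :: "'a::comm_ring_1 mat \<Rightarrow> 'a" where
  "mat_trace A = (\<Sum>i<dim_row A. A $$ (i, i))"

lemma mat_trace_mat_delete:
  assumes A: "A \<in> carrier_mat (Suc n) (Suc n)" and i: "i < Suc n"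
  shows "mat_trace (mat_delete A i i) = mat_trace A - A $$ (i, i)"
proof -
  have "mat_trace (mat_delete A i i) = (\<Sum>k\<in>{0..<n}. A $$ (insert_index i k, insert_index i k))"
    using A i by (simp add: mat_trace_def mat_delete_index atLeast0LessThan)
  also have "\<dots> = (\<Sum>j\<in>insert_index i ` {0..<n}. A $$ (j, j))"
    by (simp add: sum.reindex insert_index_inj_on)
  also have "\<dots> = (\<Sum>j\<in>{0..<Suc n} - {i}. A $$ (j, j))"
    using insert_index_image[OF i] by simp
  also have "\<dots> = mat_trace A - A $$ (i, i)"
    using A i by (simp add: mat_trace_def sum_diff1 atLeast0LessThan)
  finally show ?thesis .
qed

lemma coeff_char_poly_mat_trace:
  fixes A :: "'a::field_char_0 mat"
  assumes "A \<in> carrier_mat (Suc n) (Suc n)"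
  shows "coeff (char_poly A) n = - mat_trace A"
  using assms
proof (induction n arbitrary: A)
  case 0
  then have "coeff (char_poly A) 0 = det (- char_matrix A 0)"
    using char_poly_matrix[OF 0, of 0] by (simp add: poly_0_coeff_0)
  also have "\<dots> = - mat_trace A"
    using 0 by (subst det_single) (auto simp: char_matrix_def mat_trace_def)
  finally show ?case .
next
  case (Suc n)
  note A = Suc.prems
  have "of_nat (Suc n) * coeff (char_poly A) (Suc n) = coeff (pderiv (char_poly A)) n"
    by (simp add: coeff_pderiv)
  also have "\<dots> = (\<Sum>i<Suc (Suc n). coeff (char_poly (mat_delete A i i)) n)"
    by (simp add: pderiv_char_poly[OF A] coeff_sum)
  also have "\<dots> = (\<Sum>i<Suc (Suc n). A $$ (i, i) - mat_trace A)"
  proof (rule sum.cong[OF refl])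
    fix i assume "i \<in> {..<Suc (Suc n)}"
    then show "coeff (char_poly (mat_delete A i i)) n = A $$ (i, i) - mat_trace A"
      using Suc.IH[of "mat_delete A i i"] mat_delete_carrier[OF A] mat_trace_mat_delete[OF A]
      by simp
  qed
  also have "\<dots> = of_nat (Suc n) * - mat_trace A"
    using A by (simp add: sum_subtractf mat_trace_def algebra_simps)
  finally show ?case
    by (metis mult_left_cancel of_nat_eq_0_iff nat.distinct(1))
qed

lemma coeff_linear_factors:
  fixes as :: "'a::idom list"
  assumes "length as = Suc n"
  shows "coeff (\<Prod>a\<leftarrow>as. [:-a, 1:]) n = - sum_list as"
  using assms
proof (induction as arbitrary: n)
  case Nil
  then show ?case by simp
next
  case (Cons a as)
  let ?q = "\<Prod>a\<leftarrow>as. [:-a, 1:]"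
  have "coeff (\<Prod>a\<leftarrow>a # as. [:-a, 1:]) n = - a * coeff ?q n + coeff (pCons 0 ?q) n"
    by simp
  moreover have "coeff ?q n = 1"
  proof -
    have "monic ?q" by (intro monic_prod_list) auto
    then show ?thesis using Cons.prems by (simp add: degree_linear_factors)
  qed
  moreover have "coeff (pCons 0 ?q) n = - sum_list as"
    using Cons by (cases n) auto
  ultimately show ?case by simp
qed

lemma linear_factors_two_values:
  fixes x y :: "'a::comm_ring_1"
  assumes "set as \<subseteq> {x, y}" and "x \<noteq> y"
  shows "(\<Prod>a\<leftarrow>as. [:-a, 1:]) = [:-x, 1:] ^ count_list as x * [:-y, 1:] ^ count_list as y"
  using assms by (induction as) (auto simp: algebra_simps)

lemma sum_list_two_values:
  fixes x y :: "'a::comm_ring_1"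
  assumes "set as \<subseteq> {x, y}" and "x \<noteq> y"
  shows "sum_list as = of_nat (count_list as x) * x + of_nat (count_list as y) * y"
  using assms by (induction as) (auto simp: algebra_simps)

lemma length_two_values:
  assumes "set as \<subseteq> {x, y}" and "x \<noteq> y"
  shows "length as = count_list as x + count_list as y"
  using assms by (induction as) auto

lemma char_poly_eq_two_eigenvalues:
  fixes A :: "complex mat"
  assumes A: "A \<in> carrier_mat (n1 + n2) (n1 + n2)" and xy: "x \<noteq> y"
    and eig: "\<And>z. eigenvalue A z \<Longrightarrow> z = x \<or> z = y"
    and tr: "mat_trace A = of_nat n1 * x + of_nat n2 * y"
  shows "char_poly A = [:-x, 1:] ^ n1 * [:-y, 1:] ^ n2"
proof -
  obtain as where cp: "char_poly A = (\<Prod>a\<leftarrow>as. [:-a, 1:])" and len: "length as = n1 + n2"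
    using char_poly_factorized[OF A] by blast
  have sub: "set as \<subseteq> {x, y}"
    using eig eigenvalue_root_char_poly[OF A] linear_poly_root unfolding cp by blast
  define k1 k2 where "k1 = count_list as x" and "k2 = count_list as y"
  have k: "k1 + k2 = n1 + n2"
    using length_two_values[OF sub xy] len unfolding k1_def k2_def by simp
  have "of_nat k1 * x + of_nat k2 * y = of_nat n1 * x + of_nat n2 * y"
  proof (cases "n1 + n2")
    case 0
    with k show ?thesis by simp
  next
    case (Suc m)
    have "mat_trace A = sum_list as"
      using coeff_char_poly_mat_trace[of A m] coeff_linear_factors[of as m] A len Suc
      unfolding cp by simp
    then show ?thesis
      using sum_list_two_values[OF sub xy] tr unfolding k1_def k2_def by simp
  qed
  moreover have "(of_nat k2 :: complex) = of_nat (n1 + n2) - of_nat k1"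
    using k by (metis add_diff_cancel_left' of_nat_add)
  ultimately have "(of_nat k1 - of_nat n1) * (x - y) = (0 :: complex)"
    by (simp add: algebra_simps)
  with xy k have "k1 = n1" "k2 = n2"
    by auto
  then show ?thesis
    using linear_factors_two_values[OF sub xy] unfolding cp k1_def k2_def by simp
qed

lemma char_poly_real_eq_two_eigenvalues:
  fixes A :: "real mat"
  assumes A: "A \<in> carrier_mat (n1 + n2) (n1 + n2)" and "x \<noteq> y"
    and "\<And>z. eigenvalue (map_mat complex_of_real A) z \<Longrightarrow> z = of_real x \<or> z = of_real y"
    and "mat_trace A = of_nat n1 * x + of_nat n2 * y"
  shows "char_poly A = [:-x, 1:] ^ n1 * [:-y, 1:] ^ n2"
proof -
  interpret of_real_poly: map_poly_inj_comm_ring_hom complex_of_real ..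
  have "mat_trace (map_mat complex_of_real A) = of_real (mat_trace A)"
    using A by (simp add: mat_trace_def)
  then have "char_poly (map_mat complex_of_real A) =
      [:-of_real x, 1:] ^ n1 * [:-of_real y, 1:] ^ n2"
    using assms by (intro char_poly_eq_two_eigenvalues) auto
  then have "map_poly complex_of_real (char_poly A) =
      map_poly complex_of_real ([:-x, 1:] ^ n1 * [:-y, 1:] ^ n2)"
    unfolding of_real_hom.char_poly_hom[OF A, symmetric]
    by (simp add: of_real_poly.hom_mult of_real_poly.hom_power)
  then show ?thesis by (rule of_real_poly.injectivity)
qed

definition two_block_mat ::
  "nat \<Rightarrow> nat \<Rightarrow> 'a \<Rightarrow> 'a \<Rightarrow> 'a \<Rightarrow> 'a \<Rightarrow> 'a \<Rightarrow> 'a::comm_ring_1 mat" where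
  "two_block_mat m1 m2 a c p q g = mat (m1 + m2) (m1 + m2) (\<lambda>(i, j).
     if i < m1 \<and> j < m1 then (if i = j then a else 0) + p
     else if m1 \<le> i \<and> m1 \<le> j then (if i = j then c else 0) + q
     else g)"

lemma two_block_mat_carrier: "two_block_mat m1 m2 a c p q g \<in> carrier_mat (m1 + m2) (m1 + m2)"
  by (simp add: two_block_mat_def)

lemma transpose_two_block_mat: "(two_block_mat m1 m2 a c p q g)\<^sup>T = two_block_mat m1 m2 a c p q g"
  by (rule eq_matI) (auto simp: two_block_mat_def)

lemma of_real_two_block_mat:
  "map_mat of_real (two_block_mat m1 m2 a c p q g) =
   two_block_mat m1 m2 (of_real a) (of_real c) (of_real p) (of_real q) (of_real g)"
  by (rule eq_matI) (auto simp: two_block_mat_def)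

lemma del_vertex_two_block_mat_first:
  assumes "v < m1"
  shows "del_vertex (two_block_mat m1 m2 a c p q g) v = two_block_mat (m1 - 1) m2 a c p q g"
  using assms unfolding del_vertex_def mat_delete_def
  by (intro eq_matI) (auto simp: two_block_mat_def)

lemma del_vertex_two_block_mat_second:
  assumes "m1 \<le> v" and "v < m1 + m2"
  shows "del_vertex (two_block_mat m1 m2 a c p q g) v = two_block_mat m1 (m2 - 1) a c p q g"
  using assms unfolding del_vertex_def mat_delete_def
  by (intro eq_matI) (auto simp: two_block_mat_def)

lemma mat_trace_two_block_mat:
  "mat_trace (two_block_mat m1 m2 a c p q g) = of_nat m1 * (a + p) + of_nat m2 * (c + q)"
proof -
  let ?M = "two_block_mat m1 m2 a c p q g"
  have "mat_trace ?M = (\<Sum>i<m1. ?M $$ (i, i)) + (\<Sum>i\<in>{m1..<m1 + m2}. ?M $$ (i, i))"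
    unfolding mat_trace_def carrier_matD(1)[OF two_block_mat_carrier] by (rule sum_lessThan_add_split)
  also have "\<dots> = (\<Sum>i<m1. a + p) + (\<Sum>i\<in>{m1..<m1 + m2}. c + q)"
    by (auto simp: two_block_mat_def intro!: arg_cong2[where f = "(+)"] sum.cong)
  finally show ?thesis by simp
qed

lemma two_block_mat_in_S_K:
  assumes "p \<noteq> 0" and "q \<noteq> 0" and "g \<noteq> 0"
  shows "two_block_mat m1 m2 a c p q g \<in> S_K (m1 + m2)"
  using assms two_block_mat_carrier transpose_two_block_mat
  unfolding S_K_def by (auto simp: two_block_mat_def)

lemma two_block_mat_mult_vec_index:
  assumes v: "v \<in> carrier_vec (m1 + m2)" and i: "i < m1 + m2"
  shows "(two_block_mat m1 m2 a c p q g *\<^sub>v v) $ i =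
    (if i < m1 then a * v $ i + p * (\<Sum>j<m1. v $ j) + g * (\<Sum>j\<in>{m1..<m1 + m2}. v $ j)
     else c * v $ i + q * (\<Sum>j\<in>{m1..<m1 + m2}. v $ j) + g * (\<Sum>j<m1. v $ j))"
    (is "_ = ?rhs")
proof -
  let ?M = "two_block_mat m1 m2 a c p q g"
  have "(?M *\<^sub>v v) $ i = (\<Sum>j<m1 + m2. ?M $$ (i, j) * v $ j)"
    using v i two_block_mat_carrier[of m1 m2 a c p q g]
    by (auto simp: scalar_prod_def atLeast0LessThan intro!: sum.cong)
  also have "\<dots> = (\<Sum>j<m1. ?M $$ (i, j) * v $ j) + (\<Sum>j\<in>{m1..<m1 + m2}. ?M $$ (i, j) * v $ j)"
    by (rule sum_lessThan_add_split)
  also have "\<dots> = ?rhs"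
  proof (cases "i < m1")
    case True
    have "(\<Sum>j<m1. ?M $$ (i, j) * v $ j) = (\<Sum>j<m1. (if i = j then a else 0) * v $ j + p * v $ j)"
      using True by (auto simp: two_block_mat_def distrib_right intro!: sum.cong)
    moreover have "(\<Sum>j\<in>{m1..<m1 + m2}. ?M $$ (i, j) * v $ j) = (\<Sum>j\<in>{m1..<m1 + m2}. g * v $ j)"
      using True by (auto simp: two_block_mat_def intro!: sum.cong)
    ultimately show ?thesis
      using True
      by (simp add: sum.distrib sum_distrib_left if_distrib[of "\<lambda>x. x * _"] cong: if_cong)
  next
    case False
    have "(\<Sum>j\<in>{m1..<m1 + m2}. ?M $$ (i, j) * v $ j) =
        (\<Sum>j\<in>{m1..<m1 + m2}. (if i = j then c else 0) * v $ j + q * v $ j)"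
      using False i by (auto simp: two_block_mat_def distrib_right intro!: sum.cong)
    moreover have "(\<Sum>j<m1. ?M $$ (i, j) * v $ j) = (\<Sum>j<m1. g * v $ j)"
      using False i by (auto simp: two_block_mat_def intro!: sum.cong)
    ultimately show ?thesis
      using False i
      by (simp add: sum.distrib sum_distrib_left if_distrib[of "\<lambda>x. x * _"] cong: if_cong)
  qed
  finally show ?thesis .
qed

lemma eigenvalue_two_block_mat:
  fixes a c p q g :: "'a::field"
  assumes "eigenvalue (two_block_mat m1 m2 a c p q g) f"
  shows "f = a \<or> f = c \<or>
    (a + of_nat m1 * p - f) * (c + of_nat m2 * q - f) = of_nat m1 * of_nat m2 * g\<^sup>2"
proof -
  let ?M = "two_block_mat m1 m2 a c p q g"
  obtain v where v: "v \<in> carrier_vec (m1 + m2)" "v \<noteq> 0\<^sub>v (m1 + m2)" "?M *\<^sub>v v = f \<cdot>\<^sub>v v"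
    using assms
    unfolding eigenvalue_def eigenvector_def carrier_matD(1)[OF two_block_mat_carrier] by blast
  define s1 s2 where "s1 = (\<Sum>j<m1. v $ j)" and "s2 = (\<Sum>j\<in>{m1..<m1 + m2}. v $ j)"
  have row: "f * v $ i = (?M *\<^sub>v v) $ i" if "i < m1 + m2" for i
    using v that by simp
  have row1: "(f - a) * v $ i = p * s1 + g * s2" if "i < m1" for i
    using row[of i] two_block_mat_mult_vec_index[OF v(1)] that
    unfolding s1_def s2_def by (simp add: algebra_simps)
  have row2: "(f - c) * v $ i = q * s2 + g * s1" if "m1 \<le> i" "i < m1 + m2" for i
    using row[of i] two_block_mat_mult_vec_index[OF v(1)] that
    unfolding s1_def s2_def by (simp add: algebra_simps)
  have sum1: "(f - a) * s1 = of_nat m1 * (p * s1 + g * s2)"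
    by (simp add: s1_def s2_def sum_distrib_left row1)
  have sum2: "(f - c) * s2 = of_nat m2 * (q * s2 + g * s1)"
    by (simp add: s1_def s2_def sum_distrib_left row2)
  show ?thesis
  proof (cases "s1 = 0 \<and> s2 = 0")
    case True
    obtain i where i: "i < m1 + m2" "v $ i \<noteq> 0"
      using v(1,2) by (metis carrier_vecD eq_vecI index_zero_vec)
    then show ?thesis
      using True row1[of i] row2[of i] by (cases "i < m1") auto
  next
    case False
    with sum1 sum2 have "(a + of_nat m1 * p - f) * (c + of_nat m2 * q - f) =
        (of_nat m1 * g) * (of_nat m2 * g)"
      by (intro cramer_2x2_singular[where s = s1 and t = s2]) (auto simp: algebra_simps)
    then show ?thesis by (simp add: power2_eq_square mult_ac)
  qed
qed

lemma char_poly_two_block_mat: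
  fixes a c p q g :: real
  assumes "a \<noteq> c" and trace: "of_nat m1 * p + of_nat m2 * q = 0"
    and det: "(a + of_nat m1 * p) * (c + of_nat m2 * q) - of_nat m1 * of_nat m2 * g\<^sup>2 = a * c"
  shows "char_poly (two_block_mat m1 m2 a c p q g) = [:-a, 1:] ^ m1 * [:-c, 1:] ^ m2"
proof (rule char_poly_real_eq_two_eigenvalues[OF two_block_mat_carrier \<open>a \<noteq> c\<close>])
  let ?C = complex_of_real
  fix z
  assume "eigenvalue (map_mat ?C (two_block_mat m1 m2 a c p q g)) z"
  then have "z = ?C a \<or> z = ?C c \<or>
      (?C a + of_nat m1 * ?C p - z) * (?C c + of_nat m2 * ?C q - z) = of_nat m1 * of_nat m2 * (?C g)\<^sup>2"
    unfolding of_real_two_block_mat by (rule eigenvalue_two_block_mat)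
  moreover have "(?C a + of_nat m1 * ?C p - z) * (?C c + of_nat m2 * ?C q - z) -
      of_nat m1 * of_nat m2 * (?C g)\<^sup>2 =
      (?C a - z) * (?C c - z) - z * ?C (of_nat m1 * p + of_nat m2 * q) + ?C ((a + of_nat m1 * p) * (c + of_nat m2 * q) - of_nat m1 * of_nat m2 * g\<^sup>2 - a * c)"
    by (simp add: algebra_simps power2_eq_square)
  ultimately show "z = ?C a \<or> z = ?C c"
    using trace det by auto
next
  show "mat_trace (two_block_mat m1 m2 a c p q g) = of_nat m1 * a + of_nat m2 * c"
    using trace by (simp add: mat_trace_two_block_mat algebra_simps)
qed

lemma ex_between_notin_finite:
  fixes d :: real
  assumes "finite B" and "d \<noteq> 0"
  shows "\<exists>b. b \<notin> B \<and> 0 < b * (d - b)"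
proof -
  have "infinite ({min 0 d<..<max 0 d} - B)"
    using assms by (intro Diff_infinite_finite) auto
  then obtain b where "b \<in> {min 0 d<..<max 0 d}" "b \<notin> B"
    using infinite_imp_nonempty by blast
  moreover from this(1) have "0 < b * (d - b)"
    by (auto simp: zero_less_mult_iff min_def max_def split: if_splits)
  ultimately show ?thesis by blast
qed

lemma eigenvalue_del_vertex_two_block_mat:
  fixes l1 l2 b g f :: real
  assumes n1: "n1 > 0" and n2: "n2 > 0" and gg: "real n1 * real n2 * g\<^sup>2 = b * (l2 - l1 - b)"
    and v: "v < n1 + n2"
    and ev: "eigenvalue (del_vertex (two_block_mat n1 n2 l1 l2 (b / n1) (- b / n2) g) v) f"
  shows "f \<in> {l1, l2, l2 - b / n1, l1 + b / n2}"
proof (cases "v < n1")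
  case True
  then have "eigenvalue (two_block_mat (n1 - 1) n2 l1 l2 (b / n1) (- b / n2) g) f"
    using ev by (simp add: del_vertex_two_block_mat_first)
  then have "f = l1 \<or> f = l2 \<or>
      (l1 + real (n1 - 1) * (b / n1) - f) * (l2 + real n2 * (- b / n2) - f) =
      real (n1 - 1) * n2 * g\<^sup>2"
    by (rule eigenvalue_two_block_mat)
  moreover have "(l1 + real (n1 - 1) * (b / n1) - f) * (l2 + real n2 * (- b / n2) - f) -
      real (n1 - 1) * n2 * g\<^sup>2 = (l1 - f) * (l2 - b / n1 - f)"
  proof -
    have "real (n1 - 1) * n2 * g\<^sup>2 = (real n1 - 1) / n1 * (real n1 * real n2 * g\<^sup>2)"
      using n1 by (simp add: of_nat_diff)
    also have "\<dots> = (real n1 - 1) * b * (l2 - l1 - b) / n1"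
      unfolding gg by simp
    finally show ?thesis
      using n1 n2 by (simp add: of_nat_diff field_simps)
  qed
  ultimately show ?thesis by auto
next
  case False
  then have "eigenvalue (two_block_mat n1 (n2 - 1) l1 l2 (b / n1) (- b / n2) g) f"
    using ev v by (simp add: del_vertex_two_block_mat_second)
  then have "f = l1 \<or> f = l2 \<or>
      (l1 + real n1 * (b / n1) - f) * (l2 + real (n2 - 1) * (- b / n2) - f) =
      real n1 * real (n2 - 1) * g\<^sup>2"
    by (rule eigenvalue_two_block_mat)
  moreover have "(l1 + real n1 * (b / n1) - f) * (l2 + real (n2 - 1) * (- b / n2) - f) -
      real n1 * real (n2 - 1) * g\<^sup>2 = (l2 - f) * (l1 + b / n2 - f)"
  proof -
    have "real n1 * real (n2 - 1) * g\<^sup>2 = (real n2 - 1) / n2 * (real n1 * real n2 * g\<^sup>2)"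
      using n2 by (simp add: of_nat_diff)
    also have "\<dots> = (real n2 - 1) * b * (l2 - l1 - b) / n2"
      unfolding gg by simp
    finally show ?thesis
      using n1 n2 by (simp add: of_nat_diff field_simps)
  qed
  ultimately show ?thesis by auto
qed

theorem corollary4p4:
  fixes l1 l2 :: real and n1 n2 :: nat and F D :: "real set"
  assumes "l1 \<noteq> l2" and "n1 > 0" and "n2 > 0"
    and "finite F" and "finite D"
    and "{l1, l2} \<inter> F = {}"
  shows "\<exists>A \<in> S_K (n1 + n2).
           has_spectrum2 A l1 n1 l2 n2 \<and>
           (\<forall>v < n1 + n2. \<forall>f \<in> F. \<not> eigenvalue (del_vertex A v) f) \<and>
           (\<forall>i < n1 + n2. A $$ (i, i) \<notin> D)"
proof -
  define B where "B = (\<lambda>b. l1 + b / n1) -` D \<union> (\<lambda>b. l2 - b / n2) -` D \<union>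
    (\<lambda>b. l2 - b / n1) -` F \<union> (\<lambda>b. l1 + b / n2) -` F"
  have "finite B"
    unfolding B_def using assms(2-5) by (intro finite_UnI finite_vimageI) (auto simp: inj_def)
  then obtain b where b: "b \<notin> B" and pos: "0 < b * (l2 - l1 - b)"
    using ex_between_notin_finite assms(1) by (metis right_minus_eq)
  define g where "g = sqrt (b * (l2 - l1 - b) / (n1 * n2))"
  have gg: "real n1 * real n2 * g\<^sup>2 = b * (l2 - l1 - b)"
    using pos assms(2,3) by (simp add: g_def)
  define A where "A = two_block_mat n1 n2 l1 l2 (b / n1) (- b / n2) g"
  have "A \<in> S_K (n1 + n2)"
    unfolding A_def using pos gg assms(2,3) by (intro two_block_mat_in_S_K) auto
  moreover have "has_spectrum2 A l1 n1 l2 n2"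
    unfolding A_def has_spectrum2_def using assms(1-3) gg
    by (intro char_poly_two_block_mat) (auto simp: algebra_simps)
  moreover have "\<forall>v < n1 + n2. \<forall>f \<in> F. \<not> eigenvalue (del_vertex A v) f"
    using eigenvalue_del_vertex_two_block_mat[OF assms(2,3) gg] assms(6) b
    unfolding A_def B_def by blast
  moreover have "\<forall>i < n1 + n2. A $$ (i, i) \<notin> D"
    using b unfolding A_def B_def by (auto simp: two_block_mat_def)
  ultimately show ?thesis by blast
qed

end
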